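(* Let $w\in S_n$ be minimal non-separable. If $w(1)<w(n)$, then $w(i)>w(n)$ for $2\leq i\leq n+1-w(n)$; $w(1)<w(i)<w(n)$ for $n+2-w(n)\leq i\leq n-w(1)$; and $w(i)<w(1)$ for $n-w(1)+1\leq i\leq n-1$. Likewise, if $w(1)>w(n)$, then $w(i)<w(n)$ for $2\leq i\leq w(n)$; $w(n)<w(i)<w(1)$ for $w(n)+1\leq i\leq w(1)-1$; and $w(i)>w(1)$ for $w(1)\leq i\leq n-1$.
   Context: A permutation $w\in S_n$ is separable if it avoids the patterns $3142$ and $2413$: there are no indices $i_1<i_2<i_3<i_4$ such that $w(i_1)w(i_2)w(i_3)w(i_4)$ is in the same relative order as $3142$ or $2413$. For $J\subsetneq\{1,\dots,n-1\}$ (indexing the adjacent transpositions $s_i=(i,i+1)$), partition $\{1,\dots,n\}$ into maximal blocks of consecutive positions where $i$ and $i+1$ lie in the same block iff $i\in J$; $w_J$ (the component of $w$ in the parabolic subgroup $W_J$ in the factorization $w=w^Jw_J$) is separable iff for each block, the sequence of values of $w$ on that block, standardized to a permutation, is separable. $w$ is minimal non-separable if $w$ is not separable but $w_J$ is separable for every $J\subsetneq\{1,\dots,n-1\}$. *)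

theory Defs
  imports "HOL-Combinatorics.Permutations"
begin

text \<open>Permutations of S_n are functions w with w permutes {1..n}; one-line notation
  is the list of values at positions 1..n.\<close>

definition pat3142 :: "nat list \<Rightarrow> bool" where
  "pat3142 xs \<longleftrightarrow> (\<exists>i1 i2 i3 i4. i1 < i2 \<and> i2 < i3 \<and> i3 < i4 \<and> i4 < length xs \<and>
      xs!i2 < xs!i4 \<and> xs!i4 < xs!i1 \<and> xs!i1 < xs!i3)"

definition pat2413 :: "nat list \<Rightarrow> bool" where
  "pat2413 xs \<longleftrightarrow> (\<exists>i1 i2 i3 i4. i1 < i2 \<and> i2 < i3 \<and> i3 < i4 \<and> i4 < length xs \<and>
      xs!i3 < xs!i1 \<and> xs!i1 < xs!i4 \<and> xs!i4 < xs!i2)"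

definition separable_list :: "nat list \<Rightarrow> bool" where
  "separable_list xs \<longleftrightarrow> \<not> pat3142 xs \<and> \<not> pat2413 xs"

definition separable :: "nat \<Rightarrow> (nat \<Rightarrow> nat) \<Rightarrow> bool" where
  "separable n w \<longleftrightarrow> separable_list (map w [1..<n+1])"

definition standardize :: "nat list \<Rightarrow> nat list" where
  "standardize xs = map (\<lambda>x. card {y \<in> set xs. y \<le> x}) xs"

text \<open>Maximal block [a..b] of {1..n} determined by J: i, i+1 in the same block iff i \<in> J.\<close>
definition is_block :: "nat \<Rightarrow> nat set \<Rightarrow> nat \<Rightarrow> nat \<Rightarrow> bool" where
  "is_block n J a b \<longleftrightarrow> 1 \<le> a \<and> a \<le> b \<and> b \<le> n \<and> (\<forall>i. a \<le> i \<and> i < b \<longrightarrow> i \<in> J)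
     \<and> (a = 1 \<or> a - 1 \<notin> J) \<and> (b = n \<or> b \<notin> J)"

definition parabolic_separable :: "nat \<Rightarrow> (nat \<Rightarrow> nat) \<Rightarrow> nat set \<Rightarrow> bool" where
  "parabolic_separable n w J \<longleftrightarrow>
     (\<forall>a b. is_block n J a b \<longrightarrow> separable_list (standardize (map w [a..<b+1])))"

definition min_nonseparable :: "nat \<Rightarrow> (nat \<Rightarrow> nat) \<Rightarrow> bool" where
  "min_nonseparable n w \<longleftrightarrow> w permutes {1..n} \<and> \<not> separable n w \<and>
     (\<forall>J. J \<subset> {1..n-1} \<longrightarrow> parabolic_separable n w J)"

end

theory Submission
  imports Defs
begin

(* By minimality, w_J is separable for J = {2..n-1} and J = {1..n-2}, so every occurrence of
   3142 or 2413 in w uses both positions 1 and n; since w is not separable, there is one,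
   at positions 1 < j0 < k0 < n.  If w(1) < w(n) it is a 2413.  Combining any two inner
   positions in the wrong order with some of 1, j0, k0, n yields an occurrence avoiding
   position 1 or n; hence the inner positions carry first all values above w(n), then those
   between w(1) and w(n), then those below w(1), and counting each class gives the ranges.
   Complementing values exchanges 3142 and 2413, which reduces the case w(1) > w(n) to this. *)

definition nonseparable_at :: "(nat \<Rightarrow> nat) \<Rightarrow> nat \<Rightarrow> nat \<Rightarrow> nat \<Rightarrow> nat \<Rightarrow> bool" where
  "nonseparable_at w i j k l \<longleftrightarrow>
     (w j < w l \<and> w l < w i \<and> w i < w k) \<or> (w k < w i \<and> w i < w l \<and> w l < w j)"

lemma separable_list_iff_nonseparable_at:
  "separable_list xs \<longleftrightarrow>
     \<not> (\<exists>i j k l. i < j \<and> j < k \<and> k < l \<and> l < length xs \<and> nonseparable_at ((!) xs) i j k l)"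
  unfolding separable_list_def pat3142_def pat2413_def nonseparable_at_def by blast

lemma nonseparable_at_order_cong:
  assumes "\<And>p q. p \<in> {i, j, k, l} \<Longrightarrow> q \<in> {i, j, k, l} \<Longrightarrow> v p < v q \<longleftrightarrow> w p < w q"
  shows "nonseparable_at v i j k l \<longleftrightarrow> nonseparable_at w i j k l"
  unfolding nonseparable_at_def using assms by simp

lemma standardize_nth_less_iff:
  assumes "i < length xs" "j < length xs"
  shows "standardize xs ! i < standardize xs ! j \<longleftrightarrow> xs ! i < xs ! j"
proof -
  have "card {y \<in> set xs. y \<le> x} < card {y \<in> set xs. y \<le> z} \<longleftrightarrow> x < z"
    if "x \<in> set xs" "z \<in> set xs" for x z
  proof
    assume "x < z"
    then have "{y \<in> set xs. y \<le> x} \<subseteq> {y \<in> set xs. y \<le> z}"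
      and "z \<in> {y \<in> set xs. y \<le> z} - {y \<in> set xs. y \<le> x}" using that by auto
    then have "{y \<in> set xs. y \<le> x} \<subset> {y \<in> set xs. y \<le> z}" by blast
    then show "card {y \<in> set xs. y \<le> x} < card {y \<in> set xs. y \<le> z}"
      by (simp add: psubset_card_mono)
  next
    assume less: "card {y \<in> set xs. y \<le> x} < card {y \<in> set xs. y \<le> z}"
    show "x < z"
    proof (rule ccontr)
      assume "\<not> x < z"
      then have "card {y \<in> set xs. y \<le> z} \<le> card {y \<in> set xs. y \<le> x}"
        by (intro card_mono) auto
      with less show False by simp
    qed
  qed
  then show ?thesis using assms by (simp add: standardize_def)
qed

lemma separable_list_standardize: "separable_list (standardize xs) \<longleftrightarrow> separable_list xs"
proof -
  have "nonseparable_at ((!) (standardize xs)) i j k l \<longleftrightarrow> nonseparable_at ((!) xs) i j k l"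
    if "i < j" "j < k" "k < l" "l < length xs" for i j k l
    using that by (intro nonseparable_at_order_cong) (auto simp: standardize_nth_less_iff)
  moreover have "length (standardize xs) = length xs" by (simp add: standardize_def)
  ultimately show ?thesis unfolding separable_list_iff_nonseparable_at by metis
qed

lemma separable_list_map_upt:
  "separable_list (map w [a..<b]) \<longleftrightarrow>
     \<not> (\<exists>i j k l. a \<le> i \<and> i < j \<and> j < k \<and> k < l \<and> l < b \<and> nonseparable_at w i j k l)"
proof -
  let ?xs = "map w [a..<b]"
  have nth: "nonseparable_at ((!) ?xs) i j k l \<longleftrightarrow> nonseparable_at w (a + i) (a + j) (a + k) (a + l)"
    if "i < j" "j < k" "k < l" "l < b - a" for i j k l
    using that unfolding nonseparable_at_def by simp
  have "(\<exists>i j k l. i < j \<and> j < k \<and> k < l \<and> l < length ?xs \<and> nonseparable_at ((!) ?xs) i j k l) \<longleftrightarrow>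
        (\<exists>i j k l. a \<le> i \<and> i < j \<and> j < k \<and> k < l \<and> l < b \<and> nonseparable_at w i j k l)"
  proof
    assume "\<exists>i j k l. i < j \<and> j < k \<and> k < l \<and> l < length ?xs \<and> nonseparable_at ((!) ?xs) i j k l"
    then obtain i j k l where ijkl: "i < j" "j < k" "k < l" "l < b - a" "nonseparable_at ((!) ?xs) i j k l"
      by auto
    show "\<exists>i j k l. a \<le> i \<and> i < j \<and> j < k \<and> k < l \<and> l < b \<and> nonseparable_at w i j k l"
    proof (intro exI conjI)
      show "a \<le> a + i" "a + i < a + j" "a + j < a + k" "a + k < a + l" "a + l < b"
        using ijkl by simp_all
      show "nonseparable_at w (a + i) (a + j) (a + k) (a + l)"
        using nth ijkl by simp
    qed
  next
    assume "\<exists>i j k l. a \<le> i \<and> i < j \<and> j < k \<and> k < l \<and> l < b \<and> nonseparable_at w i j k l"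
    then obtain i j k l where ijkl: "a \<le> i" "i < j" "j < k" "k < l" "l < b" "nonseparable_at w i j k l"
      by auto
    show "\<exists>i j k l. i < j \<and> j < k \<and> k < l \<and> l < length ?xs \<and> nonseparable_at ((!) ?xs) i j k l"
    proof (intro exI conjI)
      show "i - a < j - a" "j - a < k - a" "k - a < l - a" "l - a < length ?xs"
        using ijkl by simp_all
      then show "nonseparable_at ((!) ?xs) (i - a) (j - a) (k - a) (l - a)"
        using nth[of "i - a" "j - a" "k - a" "l - a"] ijkl by simp
    qed
  qed
  then show ?thesis unfolding separable_list_iff_nonseparable_at by (rule arg_cong[where f = Not])
qed

definition patterns_at_ends :: "nat \<Rightarrow> (nat \<Rightarrow> nat) \<Rightarrow> bool" where
  "patterns_at_ends n w \<longleftrightarrow>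
     (\<forall>i j k l. 1 \<le> i \<and> i < j \<and> j < k \<and> k < l \<and> l \<le> n \<and> nonseparable_at w i j k l \<longrightarrow> i = 1 \<and> l = n)"

lemma parabolic_separable_blockD:
  assumes "parabolic_separable n w J" "is_block n J a b"
    and "a \<le> i" "i < j" "j < k" "k < l" "l \<le> b"
  shows "\<not> nonseparable_at w i j k l"
proof -
  have "separable_list (map w [a..<Suc b])"
    using assms(1,2) by (simp add: parabolic_separable_def separable_list_standardize)
  then show ?thesis using assms(3-) unfolding separable_list_map_upt by auto
qed

lemma min_nonseparable_patterns_at_ends:
  assumes "min_nonseparable n w"
  shows "patterns_at_ends n w"
  unfolding patterns_at_ends_def
proof (intro allI impI)
  fix i j k l
  assume occ: "1 \<le> i \<and> i < j \<and> j < k \<and> k < l \<and> l \<le> n \<and> nonseparable_at w i j k l"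
  have par: "parabolic_separable n w J" if "J \<subset> {1..n-1}" for J
    using assms that by (simp add: min_nonseparable_def)
  have "\<not> 2 \<le> i"
  proof
    assume "2 \<le> i"
    have "parabolic_separable n w {2..n-1}" using occ by (intro par) auto
    moreover have "is_block n {2..n-1} 2 n" using occ by (auto simp: is_block_def)
    ultimately have "\<not> nonseparable_at w i j k l"
      using \<open>2 \<le> i\<close> occ by (intro parabolic_separable_blockD) auto
    with occ show False by simp
  qed
  moreover have "\<not> l < n"
  proof
    assume "l < n"
    have "parabolic_separable n w {1..n-2}" using occ by (intro par) auto
    moreover have "is_block n {1..n-2} 1 (n-1)" using occ by (auto simp: is_block_def)
    ultimately have "\<not> nonseparable_at w i j k l"
      using \<open>l < n\<close> occ by (intro parabolic_separable_blockD) auto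
    with occ show False by simp
  qed
  ultimately show "i = 1 \<and> l = n" using occ by simp
qed

lemma not_separable_obtains_nonseparable_at:
  assumes "\<not> separable n w"
  obtains i j k l where "1 \<le> i" "i < j" "j < k" "k < l" "l \<le> n" "nonseparable_at w i j k l"
  using assms unfolding separable_def separable_list_map_upt by auto

locale spanning_2413 =
  fixes n :: nat and w :: "nat \<Rightarrow> nat" and j0 k0 :: nat
  assumes bij: "bij_betw w {1..n} {1..n}"
    and patterns_at_ends: "patterns_at_ends n w"
    and witness_positions: "1 < j0" "j0 < k0" "k0 < n"
    and witness_values: "w k0 < w 1" "w 1 < w n" "w n < w j0"
begin

lemma no_3142_avoiding_ends:
  assumes "1 \<le> i" "i < j" "j < k" "k < l" "l \<le> n" "1 < i \<or> l < n"
    and "w j < w l" "w l < w i" "w i < w k"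
  shows False
  using patterns_at_ends assms unfolding patterns_at_ends_def nonseparable_at_def by (metis less_irrefl)

lemma no_2413_avoiding_ends:
  assumes "1 \<le> i" "i < j" "j < k" "k < l" "l \<le> n" "1 < i \<or> l < n"
    and "w k < w i" "w i < w l" "w l < w j"
  shows False
  using patterns_at_ends assms unfolding patterns_at_ends_def nonseparable_at_def by (metis less_irrefl)

lemma value_range: "1 \<le> i \<Longrightarrow> i \<le> n \<Longrightarrow> 1 \<le> w i \<and> w i \<le> n"
  using bij_betw_apply[OF bij] by simp

lemma value_eq_iff: "1 \<le> i \<Longrightarrow> i \<le> n \<Longrightarrow> 1 \<le> j \<Longrightarrow> j \<le> n \<Longrightarrow> w i = w j \<longleftrightarrow> i = j"
  using bij_betw_imp_inj_on[OF bij] by (auto dest: inj_onD)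

lemma end_values: "1 \<le> w 1" "w n \<le> n"
  using value_range[of 1] value_range[of n] witness_positions by simp_all

lemma inner_value_ne_ends: "1 < i \<Longrightarrow> i < n \<Longrightarrow> w i \<noteq> w 1 \<and> w i \<noteq> w n"
  using value_eq_iff[of i 1] value_eq_iff[of i n] by simp

lemma low_not_before_high:
  assumes "1 < i" "i < j" "j < n" "w i < w 1" "w n < w j"
  shows False
proof -
  consider "j0 < i" | "i < j0"
    using witness_values assms by fastforce
  then show False
  proof cases
    case 1
    moreover have "w j \<noteq> w j0" using 1 assms witness_positions value_eq_iff by simp
    ultimately consider "w j0 < w j" | "w j < w j0" by fastforce
    then show False
    proof cases
      case 1
      with assms \<open>j0 < i\<close> show False
        by (intro no_3142_avoiding_ends[of j0 i j n]) (use witness_values witness_positions in auto)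
    next
      case 2
      with assms \<open>j0 < i\<close> show False
        by (intro no_2413_avoiding_ends[of 1 j0 i j]) (use witness_values witness_positions in auto)
    qed
  next
    case 2
    moreover have "w i \<noteq> w k0" using 2 assms witness_positions value_eq_iff by simp
    ultimately consider "w k0 < w i" | "w i < w k0" by fastforce
    then show False
    proof cases
      case 1
      with assms \<open>i < j0\<close> show False
        by (intro no_2413_avoiding_ends[of i j0 k0 n]) (use witness_values witness_positions in auto)
    next
      case 2
      with assms \<open>i < j0\<close> show False
        by (intro no_3142_avoiding_ends[of 1 i j0 k0]) (use witness_values witness_positions in auto)
    qed
  qed
qed

lemma mid_between_witnesses:
  assumes "1 < i" "i < n" "w 1 < w i" "w i < w n"
  shows "j0 < i" "i < k0"
proof -
  show "j0 < i"
  proof (rule ccontr)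
    assume "\<not> j0 < i"
    then have "i < j0" using assms witness_values by (metis less_asym nat_neq_iff)
    with assms show False by (intro no_2413_avoiding_ends[of i j0 k0 n]) (use witness_values witness_positions in auto)
  qed
  show "i < k0"
  proof (rule ccontr)
    assume "\<not> i < k0"
    then have "k0 < i" using assms witness_values by (metis less_asym nat_neq_iff)
    with assms show False by (intro no_2413_avoiding_ends[of 1 j0 k0 i]) (use witness_values witness_positions in auto)
  qed
qed

lemma mid_not_before_high:
  assumes "1 < i" "i < j" "j < n" "w 1 < w i" "w i < w n" "w n < w j"
  shows False
proof -
  have "j0 < i" "i < k0" using mid_between_witnesses assms by auto
  consider "j < k0" | "k0 < j"
    using witness_values assms by fastforce
  then show False
  proof cases
    case 1
    with assms \<open>i < k0\<close> show False
      by (intro no_2413_avoiding_ends[of i j k0 n]) (use witness_values witness_positions in auto)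
  next
    case 2
    with assms show False
      by (intro low_not_before_high[of k0 j]) (use witness_values witness_positions in auto)
  qed
qed

lemma low_not_before_mid:
  assumes "1 < i" "i < j" "j < n" "w i < w 1" "w 1 < w j" "w j < w n"
  shows False
proof -
  have "j0 < j" "j < k0" using mid_between_witnesses assms by auto
  consider "j0 < i" | "i < j0"
    using witness_values assms by fastforce
  then show False
  proof cases
    case 1
    with assms show False
      by (intro no_2413_avoiding_ends[of 1 j0 i j]) (use witness_values witness_positions in auto)
  next
    case 2
    with assms \<open>j0 < j\<close> show False
      by (intro low_not_before_high[of i j0]) (use witness_values witness_positions in auto)
  qed
qed

lemma high_prefix:
  assumes "1 < i" "i \<le> j" "j < n" "w n < w j"
  shows "w n < w i"
proof (rule ccontr)
  assume "\<not> w n < w i"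
  moreover have "w i \<noteq> w n" "w i \<noteq> w 1" using assms value_eq_iff by simp_all
  ultimately consider "w i < w 1" | "w 1 < w i \<and> w i < w n" by fastforce
  moreover have "i < j" using assms \<open>\<not> w n < w i\<close> le_neq_trans by blast
  ultimately show False
    by cases (use assms low_not_before_high mid_not_before_high in blast)+
qed

lemma low_suffix:
  assumes "1 < i" "i \<le> j" "j < n" "w i < w 1"
  shows "w j < w 1"
proof (rule ccontr)
  assume "\<not> w j < w 1"
  moreover have "w j \<noteq> w n" "w j \<noteq> w 1" using assms value_eq_iff by simp_all
  ultimately consider "w n < w j" | "w 1 < w j \<and> w j < w n" by fastforce
  moreover have "i < j" using assms \<open>\<not> w j < w 1\<close> le_neq_trans by blast
  ultimately show False
    by cases (use assms low_not_before_high low_not_before_mid in blast)+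
qed

lemma inj_on_interval: "1 \<le> p \<Longrightarrow> q \<le> n \<Longrightarrow> inj_on w {p..q}"
  using bij_betw_imp_inj_on[OF bij] by (rule inj_on_subset) auto

lemma preimageE:
  assumes "y \<in> {1..n}"
  obtains x where "x \<in> {1..n}" "y = w x"
  using assms bij_betw_imp_surj_on[OF bij] by (metis imageE)

lemma high_position_le:
  assumes "1 < i" "i < n" "w n < w i"
  shows "i \<le> n + 1 - w n"
proof -
  have "w q \<in> {w n + 1..n}" if "q \<in> {2..i}" for q
    using high_prefix[of q i] value_range[of q] that assms by simp
  then have "w ` {2..i} \<subseteq> {w n + 1..n}" by blast
  with inj_on_interval[of 2 i] assms have "card {2..i} \<le> card {w n + 1..n}"
    by (intro card_inj_on_le) auto
  then show ?thesis using assms value_range[of n] by simp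
qed

lemma not_high_position_ge:
  assumes "1 < i" "i < n" "w i < w n"
  shows "n + 2 - w n \<le> i"
proof -
  have "y \<in> w ` {2..i - 1}" if y: "y \<in> {w n + 1..n}" for y
  proof -
    from y have "y \<in> {1..n}" by simp
    then obtain x where x: "x \<in> {1..n}" "y = w x" by (rule preimageE)
    have "x \<noteq> 1" "x \<noteq> n" using x y witness_values by auto
    moreover have "\<not> i \<le> x" using high_prefix[of i x] x y assms \<open>x \<noteq> n\<close> by auto
    ultimately show ?thesis using x by auto
  qed
  then have "{w n + 1..n} \<subseteq> w ` {2..i - 1}" by blast
  then have "card {w n + 1..n} \<le> card {2..i - 1}"
    by (intro surj_card_le) auto
  then show ?thesis using assms value_range[of n] by simp
qed

lemma low_position_ge:
  assumes "1 < i" "i < n" "w i < w 1"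
  shows "n + 1 - w 1 \<le> i"
proof -
  have "w q \<in> {1..w 1 - 1}" if "q \<in> {i..n - 1}" for q
  proof -
    have "q \<le> n" using that by (meson atLeastAtMost_iff diff_le_self le_trans)
    then have "1 \<le> w q" using value_range[of q] that assms by simp
    moreover have "w q < w 1" using that assms by (intro low_suffix[of i q]) auto
    ultimately show ?thesis by simp
  qed
  then have "w ` {i..n - 1} \<subseteq> {1..w 1 - 1}" by blast
  with inj_on_interval[of i "n - 1"] assms have "card {i..n - 1} \<le> card {1..w 1 - 1}"
    by (intro card_inj_on_le) auto
  then show ?thesis using assms by simp
qed

lemma not_low_position_le:
  assumes "1 < i" "i < n" "w 1 < w i"
  shows "i \<le> n - w 1"
proof -
  have "y \<in> w ` {i + 1..n - 1}" if y: "y \<in> {1..w 1 - 1}" for y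
  proof -
    have "w 1 \<le> n" using value_range[of 1] witness_positions by simp
    with y have "y \<in> {1..n}" by (simp; linarith)
    then obtain x where x: "x \<in> {1..n}" "y = w x" by (rule preimageE)
    have "w x < w 1" using x y by (simp; linarith)
    then have "x \<noteq> 1" "x \<noteq> n" using witness_values by auto
    moreover have "\<not> x \<le> i" using low_suffix[of x i] x assms \<open>x \<noteq> 1\<close> \<open>w x < w 1\<close> by auto
    ultimately show ?thesis using x by auto
  qed
  then have "{1..w 1 - 1} \<subseteq> w ` {i + 1..n - 1}" by blast
  then have "card {1..w 1 - 1} \<le> card {i + 1..n - 1}"
    by (intro surj_card_le) auto
  then show ?thesis using assms by simp
qed

lemma high_block:
  assumes "2 \<le> i" "i \<le> n + 1 - w n"
  shows "w n < w i"
proof (rule ccontr)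
  have inner: "1 < i" "i < n" using assms end_values witness_values by linarith+
  assume "\<not> w n < w i"
  with inner_value_ne_ends[OF inner] have "w i < w n" by simp
  with inner have "n + 2 - w n \<le> i" by (rule not_high_position_ge)
  with assms end_values show False by linarith
qed

lemma mid_block:
  assumes "n + 2 - w n \<le> i" "i \<le> n - w 1"
  shows "w 1 < w i" "w i < w n"
proof -
  have inner: "1 < i" "i < n" using assms end_values by linarith+
  show "w 1 < w i"
  proof (rule ccontr)
    assume "\<not> w 1 < w i"
    with inner_value_ne_ends[OF inner] have "w i < w 1" by simp
    with inner have "n + 1 - w 1 \<le> i" by (rule low_position_ge)
    with assms end_values show False by linarith
  qed
  show "w i < w n"
  proof (rule ccontr)
    assume "\<not> w i < w n"
    with inner_value_ne_ends[OF inner] have "w n < w i" by simp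
    with inner have "i \<le> n + 1 - w n" by (rule high_position_le)
    with assms end_values show False by linarith
  qed
qed

lemma low_block:
  assumes "n - w 1 + 1 \<le> i" "i \<le> n - 1"
  shows "w i < w 1"
proof (rule ccontr)
  have inner: "1 < i" "i < n" using assms end_values witness_values by linarith+
  assume "\<not> w i < w 1"
  with inner_value_ne_ends[OF inner] have "w 1 < w i" by simp
  with inner have "i \<le> n - w 1" by (rule not_low_position_le)
  with assms show False by linarith
qed

theorem inner_values:
  "(\<forall>i. 2 \<le> i \<and> i \<le> n + 1 - w n \<longrightarrow> w i > w n) \<and>
   (\<forall>i. n + 2 - w n \<le> i \<and> i \<le> n - w 1 \<longrightarrow> w 1 < w i \<and> w i < w n) \<and>
   (\<forall>i. n - w 1 + 1 \<le> i \<and> i \<le> n - 1 \<longrightarrow> w i < w 1)"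
  using high_block mid_block low_block by simp

end

lemma nonseparable_at_complement:
  fixes m :: nat
  assumes "w i \<le> m" "w j \<le> m" "w k \<le> m" "w l \<le> m"
  shows "nonseparable_at (\<lambda>x. m - w x) i j k l \<longleftrightarrow> nonseparable_at w i j k l"
  using assms unfolding nonseparable_at_def by linarith

lemma bij_betw_complement:
  fixes n :: nat
  assumes "bij_betw w {1..n} {1..n}"
  shows "bij_betw (\<lambda>x. n + 1 - w x) {1..n} {1..n}"
proof -
  have "bij_betw (\<lambda>y. n + 1 - y) {1..n} {1..n}"
    by (rule bij_betw_byWitness[where f' = "\<lambda>y. n + 1 - y"]) auto
  from bij_betw_trans[OF assms this] show ?thesis by (simp add: comp_def)
qed

lemma patterns_at_ends_complement:
  fixes n :: nat
  assumes "bij_betw w {1..n} {1..n}" "patterns_at_ends n w"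
  shows "patterns_at_ends n (\<lambda>x. n + 1 - w x)"
  unfolding patterns_at_ends_def
proof (intro allI impI)
  fix i j k l
  assume occ: "1 \<le> i \<and> i < j \<and> j < k \<and> k < l \<and> l \<le> n \<and> nonseparable_at (\<lambda>x. n + 1 - w x) i j k l"
  have "w x \<le> n + 1" if "x \<in> {i, j, k, l}" for x
    using bij_betw_apply[OF assms(1), of x] that occ by auto
  with occ have "nonseparable_at w i j k l" by (simp add: nonseparable_at_complement)
  with occ assms(2) show "i = 1 \<and> l = n" unfolding patterns_at_ends_def by blast
qed

lemma inner_values_3142:
  fixes n :: nat
  assumes bij: "bij_betw w {1..n} {1..n}" and ends: "patterns_at_ends n w"
    and "1 < j" "j < k" "k < n" "w j < w n" "w n < w 1" "w 1 < w k"
  shows "(\<forall>i. 2 \<le> i \<and> i \<le> w n \<longrightarrow> w i < w n) \<and>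
         (\<forall>i. w n + 1 \<le> i \<and> i \<le> w 1 - 1 \<longrightarrow> w n < w i \<and> w i < w 1) \<and>
         (\<forall>i. w 1 \<le> i \<and> i \<le> n - 1 \<longrightarrow> w i > w 1)"
proof -
  define v where "v x = n + 1 - w x" for x
  have range: "1 \<le> w x \<and> w x \<le> n" if "1 \<le> x" "x \<le> n" for x
    using bij_betw_apply[OF bij, of x] that by simp
  have less_iff: "v x < v y \<longleftrightarrow> w y < w x" if "1 \<le> x" "x \<le> n" "1 \<le> y" "y \<le> n" for x y
    using range[OF that(1,2)] range[OF that(3,4)] unfolding v_def by linarith
  interpret spanning_2413 n v j k
  proof
    show "bij_betw v {1..n} {1..n}"
      unfolding v_def[abs_def] using bij by (rule bij_betw_complement)
    show "patterns_at_ends n v"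
      unfolding v_def[abs_def] using bij ends by (rule patterns_at_ends_complement)
    show "1 < j" "j < k" "k < n" by fact+
    show "v k < v 1" "v 1 < v n" "v n < v j"
      using assms less_iff by simp_all
  qed
  have end_values: "1 \<le> w 1" "w 1 \<le> n" "1 \<le> w n" "w n \<le> n"
    using range[of 1] range[of n] \<open>k < n\<close> by auto
  have v_ends: "v 1 = n + 1 - w 1" "v n = n + 1 - w n" unfolding v_def by simp_all
  show ?thesis
  proof (intro conjI allI impI)
    fix i assume i: "2 \<le> i \<and> i \<le> w n"
    then have "2 \<le> i" "i \<le> n + 1 - v n" using end_values unfolding v_ends by linarith+
    then have "v n < v i" by (rule high_block)
    moreover have "1 \<le> i" "i \<le> n" using i end_values by linarith+
    ultimately show "w i < w n" using less_iff[of n i] end_values by simp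
  next
    fix i assume i: "w n + 1 \<le> i \<and> i \<le> w 1 - 1"
    then have "n + 2 - v n \<le> i" "i \<le> n - v 1" using end_values unfolding v_ends by linarith+
    then have "v 1 < v i" "v i < v n" by (rule mid_block)+
    moreover have "1 \<le> i" "i \<le> n" using i end_values by linarith+
    ultimately show "w n < w i" "w i < w 1"
      using less_iff[of 1 i] less_iff[of i n] end_values by simp_all
  next
    fix i assume i: "w 1 \<le> i \<and> i \<le> n - 1"
    then have "n - v 1 + 1 \<le> i" "i \<le> n - 1" using end_values unfolding v_ends by linarith+
    then have "v i < v 1" by (rule low_block)
    moreover have "1 \<le> i" "i \<le> n" using i end_values by linarith+
    ultimately show "w 1 < w i" using less_iff[of i 1] end_values by simp
  qed
qed

theorem lemma6p3:
  fixes n :: nat and w :: "nat \<Rightarrow> nat"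
  assumes "min_nonseparable n w"
  shows "(w 1 < w n \<longrightarrow>
            (\<forall>i. 2 \<le> i \<and> i \<le> n + 1 - w n \<longrightarrow> w i > w n) \<and>
            (\<forall>i. n + 2 - w n \<le> i \<and> i \<le> n - w 1 \<longrightarrow> w 1 < w i \<and> w i < w n) \<and>
            (\<forall>i. n - w 1 + 1 \<le> i \<and> i \<le> n - 1 \<longrightarrow> w i < w 1)) \<and>
         (w 1 > w n \<longrightarrow>
            (\<forall>i. 2 \<le> i \<and> i \<le> w n \<longrightarrow> w i < w n) \<and>
            (\<forall>i. w n + 1 \<le> i \<and> i \<le> w 1 - 1 \<longrightarrow> w n < w i \<and> w i < w 1) \<and>
            (\<forall>i. w 1 \<le> i \<and> i \<le> n - 1 \<longrightarrow> w i > w 1))"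
proof -
  have bij: "bij_betw w {1..n} {1..n}"
    using assms by (simp add: min_nonseparable_def permutes_imp_bij)
  have ends: "patterns_at_ends n w"
    using assms by (rule min_nonseparable_patterns_at_ends)
  have "\<not> separable n w" using assms by (simp add: min_nonseparable_def)
  then obtain i j k l where ijkl: "1 \<le> i" "i < j" "j < k" "k < l" "l \<le> n" "nonseparable_at w i j k l"
    by (rule not_separable_obtains_nonseparable_at)
  with ends have "i = 1" "l = n" unfolding patterns_at_ends_def by simp_all
  with ijkl have jk: "1 < j" "j < k" "k < n" and occ: "nonseparable_at w 1 j k n" by simp_all
  have "spanning_2413 n w j k" if "w 1 < w n"
    using bij ends jk occ that by unfold_locales (auto simp: nonseparable_at_def)
  moreover have "w j < w n" "w 1 < w k" if "w n < w 1"
    using occ that by (auto simp: nonseparable_at_def)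
  ultimately show ?thesis
    using spanning_2413.inner_values inner_values_3142[OF bij ends jk] by blast
qed

end
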